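(* Let $d\ge 1$, $\phi(\mathbf x,\theta)=\|\mathbf x-\theta\|$ for $\mathbf x,\theta\in\mathbb R^d$, and let $h\colon L^\infty(\mathbb R^d)\to\mathbb R$ be bounded (maps bounded sets to bounded sets) with $h(g\circ\psi)=h(g)$ for all $g\in L^\infty(\mathbb R^d)$ and every bijection $\psi\colon\mathbb R^d\to\mathbb R^d$. Let $\mu_0,\nu_0\in\mathcal P^+_{\phi,c}(\mathbb R^d)$ satisfy $\mathcal N_{h,\phi}[\mu_0]\neq\mathcal N_{h,\phi}[\nu_0]$ and consider $$\mathbb F=\{(s\mathbf Q\cdot+\mathbf y)_\#\mu_0 : s>0,\ \mathbf Q\in\mathrm O(d),\ \mathbf y\in\mathbb R^d\},\qquad \mathbb G=\{(s\mathbf Q\cdot+\mathbf y)_\#\nu_0 : s>0,\ \mathbf Q\in\mathrm O(d),\ \mathbf y\in\mathbb R^d\}.$$ Then $\mathbb F,\mathbb G\subset\mathcal P^+_{\phi,c}(\mathbb R^d)$, and $\mathcal N_{h,\phi}[\mathbb F]$ and $\mathcal N_{h,\phi}[\mathbb G]$ are linearly separable in $L^\infty_\rho(\mathbb R)$.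
   Context: Circular Radon transform: for $\theta\in\mathbb R^d$ and a finite Borel measure $\mu$ on $\mathbb R^d$, $\mathcal R_{\phi,\theta}[\mu]=(\phi(\cdot,\theta))_\#\mu$, a measure on $\mathbb R$. Fix a reference Borel probability measure $\rho$ on $\mathbb R$ without atoms. For a probability measure $\nu$ on $\mathbb R$ with $F_\nu(t)=\nu((-\infty,t])$, let $F_\nu^{[-1]}(t)=\inf\{s:F_\nu(s)>t\}$ and the CDT $\hat\nu=F_\nu^{[-1]}\circ F_\rho$; $\widehat{\mathcal R}_{\phi,\theta}[\mu]$ is the CDT of $\mathcal R_{\phi,\theta}[\mu]$. For $g\in L^2_\rho(\mathbb R)$, $\operatorname{mean}(g)=\int g\,\mathrm d\rho$, $\operatorname{std}(g)=(\int|g-\operatorname{mean}(g)|^2\mathrm d\rho)^{1/2}$; for a probability measure on $\mathbb R$, $\operatorname{std}$ denotes its standard deviation. $\mathcal P^+_{\phi,c}(\mathbb R^d)$ is the set of Borel probability measures $\mu$ on $\mathbb R^d$ with compact support for which there is $c>0$ with $\operatorname{std}(\mathcal R_{\phi,\theta}[\mu])\ge c$ for all $\theta\in\mathbb R^d$. For such $\mu$, $\mathcal N_\phi[\mu](t,\theta)=\big(\widehat{\mathcal R}_{\phi,\theta}[\mu](t)-\operatorname{mean}(\widehat{\mathcal R}_{\phi,\theta}[\mu])\big)/\operatorname{std}(\widehat{\mathcal R}_{\phi,\theta}[\mu])$ and $\mathcal N_{h,\phi}[\mu](t)=h(\mathcal N_\phi[\mu](t,\cdot))$, $t\in\mathbb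 R$. Subsets $A,B$ of a normed space $V$ are linearly separable if there exist a continuous linear functional $\ell$ on $V$ and $c\in\mathbb R$ with $\ell>c$ on $A$ and $\ell<c$ on $B$.
   Formalization: $\mathcal N_{h,\phi}[\mu_0]$ and $\mathcal N_{h,\phi}[\nu_0]$ are also assumed Borel measurable and $\rho$-essentially bounded, that is, to lie in $L^\infty_\rho(\mathbb R)$. The statement above fails without it. *)

theory Defs
  imports "HOL-Probability.Probability"
begin

definition circ_radon :: "'a::euclidean_space measure \<Rightarrow> 'a \<Rightarrow> real measure" where
  "circ_radon \<mu> \<theta> = distr \<mu> borel (\<lambda>x. norm (x - \<theta>))"

definition gen_inv :: "(real \<Rightarrow> real) \<Rightarrow> real \<Rightarrow> real" where
  "gen_inv F t = Inf {s. F s > t}"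

definition cdt :: "real measure \<Rightarrow> real measure \<Rightarrow> real \<Rightarrow> real" where
  "cdt \<rho> \<nu> = (\<lambda>t. gen_inv (cdf \<nu>) (cdf \<rho> t))"

definition fmean :: "real measure \<Rightarrow> (real \<Rightarrow> real) \<Rightarrow> real" where
  "fmean \<rho> g = (\<integral>t. g t \<partial>\<rho>)"

definition fstd :: "real measure \<Rightarrow> (real \<Rightarrow> real) \<Rightarrow> real" where
  "fstd \<rho> g = sqrt (\<integral>t. (g t - fmean \<rho> g)\<^sup>2 \<partial>\<rho>)"

definition mstd :: "real measure \<Rightarrow> real" where
  "mstd \<nu> = sqrt (\<integral>x. (x - (\<integral>y. y \<partial>\<nu>))\<^sup>2 \<partial>\<nu>)"

definition msupport :: "'a::metric_space measure \<Rightarrow> 'a set" where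
  "msupport \<mu> = {x. \<forall>e>0. emeasure \<mu> (ball x e) > 0}"

definition Pplus_circ :: "'a::euclidean_space measure set" where
  "Pplus_circ = {\<mu>. prob_space \<mu> \<and> sets \<mu> = sets borel \<and> compact (msupport \<mu>) \<and>
      (\<exists>c>0. \<forall>\<theta>. mstd (circ_radon \<mu> \<theta>) \<ge> c)}"

definition Nphi :: "real measure \<Rightarrow> 'a::euclidean_space measure \<Rightarrow> real \<Rightarrow> 'a \<Rightarrow> real" where
  "Nphi \<rho> \<mu> t \<theta> =
     (cdt \<rho> (circ_radon \<mu> \<theta>) t - fmean \<rho> (cdt \<rho> (circ_radon \<mu> \<theta>)))
       / fstd \<rho> (cdt \<rho> (circ_radon \<mu> \<theta>))"

definition Nh :: "real measure \<Rightarrow> (('a::euclidean_space \<Rightarrow> real) \<Rightarrow> real) \<Rightarrow> 'a measure \<Rightarrow> real \<Rightarrow> real" where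
  "Nh \<rho> h \<mu> t = h (\<lambda>\<theta>. Nphi \<rho> \<mu> t \<theta>)"

definition Linf :: "real measure \<Rightarrow> (real \<Rightarrow> real) set" where
  "Linf \<rho> = {f. f \<in> borel_measurable \<rho> \<and> (\<exists>B. AE x in \<rho>. \<bar>f x\<bar> \<le> B)}"

text \<open>Continuous linear functional on L^infinity_rho, given on representatives
  (well defined on a.e.-classes, bounded w.r.t. the essential sup norm).\<close>
definition cont_lin_functional :: "real measure \<Rightarrow> ((real \<Rightarrow> real) \<Rightarrow> real) \<Rightarrow> bool" where
  "cont_lin_functional \<rho> L \<longleftrightarrow>
     (\<forall>f\<in>Linf \<rho>. \<forall>g\<in>Linf \<rho>. L (\<lambda>x. f x + g x) = L f + L g) \<and>
     (\<forall>a. \<forall>f\<in>Linf \<rho>. L (\<lambda>x. a * f x) = a * L f) \<and>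
     (\<forall>f\<in>Linf \<rho>. \<forall>g\<in>Linf \<rho>. (AE x in \<rho>. f x = g x) \<longrightarrow> L f = L g) \<and>
     (\<exists>C. \<forall>f\<in>Linf \<rho>. \<forall>B. (AE x in \<rho>. \<bar>f x\<bar> \<le> B) \<longrightarrow> \<bar>L f\<bar> \<le> C * B)"

definition lin_separable_Linf :: "real measure \<Rightarrow> (real \<Rightarrow> real) set \<Rightarrow> (real \<Rightarrow> real) set \<Rightarrow> bool" where
  "lin_separable_Linf \<rho> A B \<longleftrightarrow> A \<subseteq> Linf \<rho> \<and> B \<subseteq> Linf \<rho> \<and>
     (\<exists>L c. cont_lin_functional \<rho> L \<and> (\<forall>f\<in>A. L f > c) \<and> (\<forall>f\<in>B. L f < c))"

definition sim_orbit :: "'a::euclidean_space measure \<Rightarrow> 'a measure set" where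
  "sim_orbit \<mu> = {distr \<mu> borel (\<lambda>x. s *\<^sub>R Q x + y) | s Q y.
      s > 0 \<and> orthogonal_transformation Q}"

end

theory Submission
  imports Defs
begin

text \<open>
  A similarity \<open>T x = s Q x + y\<close> acts on circular Radon projections by
  \<open>\<R>[T\<^sub>#\<mu>](\<theta>) = (r \<mapsto> s r)\<^sub># \<R>[\<mu>](T\<^sup>-\<^sup>1 \<theta>)\<close>.
  Because \<open>\<rho>\<close> has no atoms, the CDT of a compactly supported measure \<open>N\<close>
  pushes \<open>\<rho>\<close> forward to \<open>N\<close>, so its mean and standard deviation are those
  of \<open>N\<close>. The CDT commutes with the scaling \<open>r \<mapsto> s r\<close> and the
  normalisation removes the factor \<open>s\<close>; hence
  \<open>\<N>\<^sub>\<phi>[T\<^sub>#\<mu>](t, \<cdot>) = \<N>\<^sub>\<phi>[\<mu>](t, \<cdot>) \<circ> T\<^sup>-\<^sup>1\<close>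
  for \<open>\<rho>\<close>-almost every \<open>t\<close>. The lower bound on the standard deviation keeps
  \<open>\<N>\<^sub>\<phi>\<close> bounded, so the invariance of \<open>h\<close> under bijections applies and
  \<open>\<N>\<^sub>h\<^sub>,\<^sub>\<phi>\<close> is constant on each orbit up to null sets. Two distinct
  classes \<open>f\<close>, \<open>g\<close> in \<open>L\<^sup>\<infinity>\<^sub>\<rho>\<close> are separated by the functional
  \<open>u \<mapsto> \<integral> u (f - g) d\<rho>\<close>, whose values at \<open>f\<close> and \<open>g\<close> differ by
  \<open>\<parallel>f - g\<parallel>\<^sub>2\<^sup>2 > 0\<close>.
\<close>

section \<open>Separating functionals on \<open>L\<^sup>\<infinity>\<close>\<close>

lemma Linf_mult_integrable:
  assumes "finite_measure M" "f \<in> Linf M" "g \<in> Linf M"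
  shows "integrable M (\<lambda>x. f x * g x)"
proof -
  interpret finite_measure M by fact
  obtain A B where "AE x in M. \<bar>f x\<bar> \<le> A" "AE x in M. \<bar>g x\<bar> \<le> B"
    using assms(2,3) by (auto simp: Linf_def)
  then have "AE x in M. norm (f x * g x) \<le> A * B"
    by eventually_elim (simp add: abs_mult mult_mono')
  then show ?thesis
    using assms(2,3) by (intro integrable_const_bound[where B="A * B"]) (auto simp: Linf_def)
qed

lemma Linf_diff:
  assumes "f \<in> Linf M" "g \<in> Linf M"
  shows "(\<lambda>x. f x - g x) \<in> Linf M"
proof -
  obtain A B where "AE x in M. \<bar>f x\<bar> \<le> A" "AE x in M. \<bar>g x\<bar> \<le> B"
    using assms by (auto simp: Linf_def)
  then have "AE x in M. \<bar>f x - g x\<bar> \<le> A + B"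
    by eventually_elim auto
  then show ?thesis
    using assms by (auto simp: Linf_def)
qed

lemma cont_lin_functional_integral_mult:
  assumes "prob_space M" and w: "w \<in> Linf M"
  shows "cont_lin_functional M (\<lambda>u. \<integral>x. u x * w x \<partial>M)"
proof -
  interpret prob_space M by fact
  have int: "integrable M (\<lambda>x. u x * w x)" if "u \<in> Linf M" for u
    using Linf_mult_integrable[OF finite_measure_axioms that w] .
  obtain C where C: "AE x in M. \<bar>w x\<bar> \<le> C"
    using w by (auto simp: Linf_def)
  have bound: "\<bar>\<integral>x. u x * w x \<partial>M\<bar> \<le> C * B"
    if u: "u \<in> Linf M" "AE x in M. \<bar>u x\<bar> \<le> B" for u B
  proof -
    have "AE x in M. \<bar>u x * w x\<bar> \<le> B * C"
      using u(2) C by eventually_elim (simp add: abs_mult mult_mono')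
    then have "(\<integral>x. \<bar>u x * w x\<bar> \<partial>M) \<le> (\<integral>x. B * C \<partial>M)"
      using int[OF u(1)] by (intro integral_mono_AE) auto
    then have "(\<integral>x. \<bar>u x * w x\<bar> \<partial>M) \<le> C * B"
      by (simp add: prob_space mult.commute)
    then show ?thesis
      by (rule order_trans[OF integral_abs_bound])
  qed
  show ?thesis
    unfolding cont_lin_functional_def
  proof (intro conjI ballI allI impI exI[of _ C])
    fix u v assume "u \<in> Linf M" "v \<in> Linf M"
    then show "(\<integral>x. (u x + v x) * w x \<partial>M) = (\<integral>x. u x * w x \<partial>M) + (\<integral>x. v x * w x \<partial>M)"
      using int by (simp add: distrib_right)
  next
    fix a u show "(\<integral>x. a * u x * w x \<partial>M) = a * (\<integral>x. u x * w x \<partial>M)"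
      by (simp add: mult.assoc)
  next
    fix u v assume "u \<in> Linf M" "v \<in> Linf M" "AE x in M. u x = v x"
    then show "(\<integral>x. u x * w x \<partial>M) = (\<integral>x. v x * w x \<partial>M)"
      using w by (intro integral_cong_AE) (auto simp: Linf_def)
  qed (fact bound)
qed

lemma lin_separable_Linf_AE_classes:
  assumes "prob_space M"
    and f: "f \<in> Linf M" and g: "g \<in> Linf M" and fg: "\<not> (AE x in M. f x = g x)"
    and A: "A \<subseteq> Linf M" "\<And>a. a \<in> A \<Longrightarrow> AE x in M. a x = f x"
    and B: "B \<subseteq> Linf M" "\<And>b. b \<in> B \<Longrightarrow> AE x in M. b x = g x"
  shows "lin_separable_Linf M A B"
proof -
  interpret prob_space M by fact
  define w where "w x = f x - g x" for x
  define L where "L u = (\<integral>x. u x * w x \<partial>M)" for u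
  have w: "w \<in> Linf M"
    unfolding w_def using f g by (rule Linf_diff)
  have L: "cont_lin_functional M L"
    unfolding L_def using \<open>prob_space M\<close> w by (rule cont_lin_functional_integral_mult)
  have LA: "L a = L f" if "a \<in> A" for a
    using L A f that unfolding cont_lin_functional_def by blast
  have LB: "L b = L g" if "b \<in> B" for b
    using L B g that unfolding cont_lin_functional_def by blast
  have w_int: "integrable M (\<lambda>x. (w x)\<^sup>2)"
    using Linf_mult_integrable[OF finite_measure_axioms w w] by (simp add: power2_eq_square)
  have "L f - L g = (\<integral>x. (w x)\<^sup>2 \<partial>M)"
    using Linf_mult_integrable[OF finite_measure_axioms f w]
      Linf_mult_integrable[OF finite_measure_axioms g w]
    by (simp add: L_def power2_eq_square left_diff_distrib w_def
        flip: Bochner_Integration.integral_diff)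
  moreover have "(\<integral>x. (w x)\<^sup>2 \<partial>M) \<noteq> 0"
  proof
    assume "(\<integral>x. (w x)\<^sup>2 \<partial>M) = 0"
    then have "AE x in M. (w x)\<^sup>2 = 0"
      using w_int by (subst (asm) integral_nonneg_eq_0_iff_AE) auto
    then show False
      using fg by (auto simp: w_def elim: AE_mp)
  qed
  moreover have "(\<integral>x. (w x)\<^sup>2 \<partial>M) \<ge> 0"
    by simp
  ultimately have "L g < L f"
    by linarith
  then show ?thesis
    unfolding lin_separable_Linf_def
    using A B L LA LB by (intro conjI exI[of _ L] exI[of _ "(L f + L g) / 2"]) auto
qed

section \<open>Distribution functions of atomless measures\<close>

lemma (in finite_borel_measure) borel_measurable_cdf [measurable]: "cdf M \<in> borel_measurable borel"
  by (intro borel_measurable_mono monoI cdf_nondecreasing)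

context real_distribution
begin

lemma measure_cdf_le:
  assumes atomless: "\<And>x. measure M {x} = 0" and y: "0 \<le> y" "y \<le> 1"
  shows "measure M {t. cdf M t \<le> y} = y"
proof (cases "y = 1")
  case True
  then show ?thesis
    using cdf_bounded_prob prob_space by simp
next
  case False
  define D where "D = {t. cdf M t \<le> y}"
  have "closed D"
    unfolding D_def using atomless isCont_cdf
    by (intro closed_Collect_le continuous_at_imp_continuous_on) auto
  have "\<forall>\<^sub>F t in at_top. y < cdf M t"
    using cdf_lim_at_top_prob False y by (intro order_tendstoD(1)) auto
  then obtain T where T: "\<And>t. T \<le> t \<Longrightarrow> y < cdf M t"
    by (auto simp: eventually_at_top_linorder)
  have "D \<subseteq> {..T}"
  proof
    fix t
    assume "t \<in> D"
    then show "t \<in> {..T}"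
      using T[of t] by (force simp: D_def)
  qed
  then have "bdd_above D"
    by (rule bdd_above_mono[OF bdd_above_Iic])
  show ?thesis
  proof (cases "D = {}")
    case True
    have "\<not> 0 < y"
    proof
      assume "0 < y"
      then have "\<forall>\<^sub>F t in at_bot. cdf M t < y"
        by (rule order_tendstoD(2)[OF cdf_lim_at_bot])
      then obtain t where "cdf M t < y"
        by (auto simp: eventually_at_bot_linorder)
      with True show False
        by (auto simp: D_def dest: less_imp_le)
    qed
    with True y show ?thesis
      by (simp add: D_def)
  next
    case False
    define u where "u = Sup D"
    have "u \<in> D"
      unfolding u_def using False \<open>bdd_above D\<close> \<open>closed D\<close> by (rule closed_contains_Sup)
    have D_eq: "D = {..u}"
      using \<open>u \<in> D\<close> cSup_upper[OF _ \<open>bdd_above D\<close>] cdf_nondecreasing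
      by (fastforce simp: D_def u_def)
    have "y < cdf M t" if "u < t" for t
      using that D_eq unfolding D_def by (metis atMost_iff mem_Collect_eq not_le)
    then have "\<forall>\<^sub>F t in at_right u. y \<le> cdf M t"
      by (auto simp: eventually_at_right_field intro!: exI[of _ "u + 1"] less_imp_le)
    then have "y \<le> cdf M u"
      using cdf_is_right_cont[of u] by (intro tendsto_lowerbound) (auto simp: continuous_within)
    with \<open>u \<in> D\<close> have "cdf M u = y"
      by (simp add: D_def)
    then show ?thesis
      using D_eq by (simp add: D_def cdf_def)
  qed
qed

lemma measure_cdf_less:
  assumes atomless: "\<And>x. measure M {x} = 0" and y: "0 \<le> y" "y \<le> 1"
  shows "measure M {t. cdf M t < y} = y"
proof (rule antisym)
  have "measure M {t. cdf M t < y} \<le> measure M {t. cdf M t \<le> y}"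
    by (rule finite_measure_mono) auto
  then show "measure M {t. cdf M t < y} \<le> y"
    using measure_cdf_le[OF atomless y] by simp
next
  have "w \<le> measure M {t. cdf M t < y}" if "0 < w" "w < y" for w
  proof -
    have "measure M {t. cdf M t \<le> w} \<le> measure M {t. cdf M t < y}"
      using that by (intro finite_measure_mono) auto
    then show ?thesis
      using measure_cdf_le[OF atomless, of w] that y by simp
  qed
  then show "y \<le> measure M {t. cdf M t < y}"
  proof (cases "y = 0")
    case False
    with y have "0 < y"
      by simp
    then show ?thesis
      by (rule dense_le_bounded) fact
  qed simp
qed

lemma AE_cdf_less_1:
  assumes "\<And>x. measure M {x} = 0"
  shows "AE t in M. cdf M t < 1"
  using AE_prob_1[OF measure_cdf_less[OF assms, of 1]] by simp

end

section \<open>Quantile functions of compactly supported distributions\<close>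

locale bounded_real_distribution = real_distribution +
  fixes a b :: real
  assumes AE_in_interval: "AE x in M. a \<le> x \<and> x \<le> b"
begin

lemma cdf_below:
  assumes "s < a"
  shows "cdf M s = 0"
proof -
  have "measure M {..s} = measure M {}"
    by (rule measure_eq_AE) (use AE_in_interval assms in \<open>auto elim: eventually_mono\<close>)
  then show ?thesis
    by (simp add: cdf_def)
qed

lemma cdf_above:
  assumes "b \<le> s"
  shows "cdf M s = 1"
proof -
  have "measure M {..s} = measure M (space M)"
    by (rule measure_eq_AE) (use AE_in_interval assms in \<open>auto elim: eventually_mono\<close>)
  then show ?thesis
    using prob_space by (simp add: cdf_def)
qed

lemma mean_in_interval: "a \<le> (\<integral>x. x \<partial>M)" "(\<integral>x. x \<partial>M) \<le> b"
proof -
  have "AE x in M. norm x \<le> \<bar>a\<bar> + \<bar>b\<bar>"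
    using AE_in_interval by eventually_elim auto
  then have int: "integrable M (\<lambda>x. x)"
    by (intro integrable_const_bound) auto
  have "(\<integral>x. a \<partial>M) \<le> (\<integral>x. x \<partial>M)"
    by (rule integral_mono_AE) (use int AE_in_interval in \<open>auto elim: eventually_mono\<close>)
  moreover have "(\<integral>x. x \<partial>M) \<le> (\<integral>x. b \<partial>M)"
    by (rule integral_mono_AE) (use int AE_in_interval in \<open>auto elim: eventually_mono\<close>)
  ultimately show "a \<le> (\<integral>x. x \<partial>M)" "(\<integral>x. x \<partial>M) \<le> b"
    using prob_space by simp_all
qed

lemma cdf_superlevel_set:
  assumes "0 \<le> x" "x < 1"
  shows "b \<in> {s. x < cdf M s}" "{s. x < cdf M s} \<subseteq> {a..}"
  using assms cdf_above[of b] cdf_below by (force simp: not_le[symmetric])+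

lemma gen_inv_cdf_in_interval:
  assumes "0 \<le> x" "x < 1"
  shows "a \<le> gen_inv (cdf M) x" "gen_inv (cdf M) x \<le> b"
  using cdf_superlevel_set[OF assms] unfolding gen_inv_def
  by (auto intro!: cInf_greatest cInf_lower simp: bdd_below_def)

lemma gen_inv_cdf_le:
  assumes "0 \<le> x" "x < cdf M s"
  shows "gen_inv (cdf M) x \<le> s"
  using assms cdf_superlevel_set[of x] cdf_bounded_prob[of s] unfolding gen_inv_def
  by (intro cInf_lower) (auto simp: bdd_below_def)

lemma le_cdf_if_gen_inv_le:
  assumes "0 \<le> x" "x < 1" "gen_inv (cdf M) x \<le> s"
  shows "x \<le> cdf M s"
proof -
  have "x < cdf M s'" if "s < s'" for s'
  proof -
    have "Inf {s. x < cdf M s} < s'"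
      using assms(3) that by (simp add: gen_inv_def)
    then obtain z where "x < cdf M z" "z < s'"
      using cInf_lessD[of "{s. x < cdf M s}" s'] cdf_superlevel_set[OF assms(1,2)] by blast
    then show ?thesis
      using cdf_nondecreasing[of z s'] by simp
  qed
  then have "\<forall>\<^sub>F s' in at_right s. x \<le> cdf M s'"
    by (auto simp: eventually_at_right_field intro!: exI[of _ "s + 1"] less_imp_le)
  then show ?thesis
    using cdf_is_right_cont[of s] by (intro tendsto_lowerbound) (auto simp: continuous_within)
qed

lemma gen_inv_cdf_mono:
  assumes "0 \<le> x" "x \<le> x'" "x' < 1"
  shows "gen_inv (cdf M) x \<le> gen_inv (cdf M) x'"
  using assms cdf_superlevel_set[of x] cdf_superlevel_set[of x'] unfolding gen_inv_def
  by (intro cInf_superset_mono) (auto simp: bdd_below_def)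

end

section \<open>The cumulative distribution transform\<close>

lemma mean_distr_scale:
  fixes N :: "real measure"
  assumes "sets N = sets borel"
  shows "(\<integral>x. x \<partial>distr N borel ((*) c)) = c * (\<integral>x. x \<partial>N)"
proof -
  have "(*) c \<in> borel_measurable N"
    by (subst measurable_cong_sets[OF assms refl]) simp
  then show ?thesis
    by (subst integral_distr) auto
qed

lemma mstd_distr_scale:
  fixes N :: "real measure"
  assumes "sets N = sets borel"
  shows "mstd (distr N borel ((*) c)) = \<bar>c\<bar> * mstd N"
proof -
  define m where "m = (\<integral>x. x \<partial>N)"
  have "(*) c \<in> borel_measurable N"
    by (subst measurable_cong_sets[OF assms refl]) simp
  then have "(\<integral>x. (x - c * m)\<^sup>2 \<partial>distr N borel ((*) c)) = (\<integral>x. (c * x - c * m)\<^sup>2 \<partial>N)"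
    by (subst integral_distr) auto
  also have "\<dots> = (\<integral>x. c\<^sup>2 * (x - m)\<^sup>2 \<partial>N)"
    by (simp add: power_mult_distrib flip: right_diff_distrib)
  also have "\<dots> = c\<^sup>2 * (\<integral>x. (x - m)\<^sup>2 \<partial>N)"
    by simp
  finally show ?thesis
    using assms by (simp add: mstd_def mean_distr_scale real_sqrt_mult m_def)
qed

definition normalized_cdt :: "real measure \<Rightarrow> real measure \<Rightarrow> real \<Rightarrow> real" where
  "normalized_cdt \<rho> N t = (cdt \<rho> N t - fmean \<rho> (cdt \<rho> N)) / fstd \<rho> (cdt \<rho> N)"

context bounded_real_distribution
begin

lemma cdt_in_interval:
  assumes "cdf \<rho> t < 1"
  shows "a \<le> cdt \<rho> M t" "cdt \<rho> M t \<le> b"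
proof -
  have "0 \<le> cdf \<rho> t"
    by (simp add: cdf_def)
  then show "a \<le> cdt \<rho> M t" "cdt \<rho> M t \<le> b"
    using gen_inv_cdf_in_interval assms by (simp_all add: cdt_def)
qed

lemma borel_measurable_cdt:
  assumes "real_distribution \<rho>"
  shows "cdt \<rho> M \<in> borel_measurable borel"
proof -
  interpret R: real_distribution \<rho> by fact
  \<comment> \<open>\<open>cdt \<rho> M\<close> is monotone where \<open>cdf \<rho> < 1\<close> and constant where \<open>cdf \<rho> = 1\<close>\<close>
  define G where "G t = (if cdf \<rho> t < 1 then cdt \<rho> M t else b)" for t
  have "mono G"
  proof
    fix t t' :: real
    assume "t \<le> t'"
    then have "cdf \<rho> t \<le> cdf \<rho> t'"
      by (rule R.cdf_nondecreasing)
    then show "G t \<le> G t'"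
      using gen_inv_cdf_mono[OF R.cdf_nonneg] gen_inv_cdf_in_interval(2)[OF R.cdf_nonneg]
      by (auto simp: G_def cdt_def)
  qed
  then have [measurable]: "G \<in> borel_measurable borel"
    by (rule borel_measurable_mono)
  have "cdt \<rho> M = (\<lambda>t. if cdf \<rho> t < 1 then G t else gen_inv (cdf M) 1)"
  proof
    fix t
    show "cdt \<rho> M t = (if cdf \<rho> t < 1 then G t else gen_inv (cdf M) 1)"
      using R.cdf_bounded_prob[of t] by (cases "cdf \<rho> t < 1") (simp_all add: G_def cdt_def)
  qed
  then show ?thesis
    by simp
qed

lemma distr_cdt:
  assumes "real_distribution \<rho>" and atomless: "\<And>x. measure \<rho> {x} = 0"
  shows "distr \<rho> borel (cdt \<rho> M) = M"
proof -
  interpret R: real_distribution \<rho> by fact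
  have [measurable]: "cdt \<rho> M \<in> borel_measurable borel"
    using borel_measurable_cdt[OF assms(1)] .
  have "cdf (distr \<rho> borel (cdt \<rho> M)) s = cdf M s" for s
  proof -
    have y: "0 \<le> cdf M s" "cdf M s \<le> 1"
      by (simp_all add: cdf_nonneg cdf_bounded_prob)
    have "{t. cdt \<rho> M t \<le> s} \<in> sets \<rho>"
      by measurable
    then have "measure \<rho> {t. cdf \<rho> t < cdf M s} \<le> measure \<rho> {t. cdt \<rho> M t \<le> s}"
      using R.cdf_nonneg y
      by (intro R.finite_measure_mono) (auto simp: cdt_def intro: gen_inv_cdf_le)
    moreover have "measure \<rho> {t. cdt \<rho> M t \<le> s} \<le> measure \<rho> {t. cdf \<rho> t \<le> cdf M s}"
      using R.AE_cdf_less_1[OF atomless]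
      by (intro R.finite_measure_mono_AE)
        (auto simp: cdt_def intro: le_cdf_if_gen_inv_le[OF R.cdf_nonneg] elim: AE_mp)
    ultimately have "measure \<rho> {t. cdt \<rho> M t \<le> s} = cdf M s"
      using R.measure_cdf_less[OF atomless y] R.measure_cdf_le[OF atomless y] by simp
    then show ?thesis
      by (simp add: cdf_def measure_distr vimage_def)
  qed
  then show ?thesis
    using real_distribution_axioms by (intro cdf_unique) auto
qed

lemma cdt_moments:
  assumes "real_distribution \<rho>" and atomless: "\<And>x. measure \<rho> {x} = 0"
  shows "fmean \<rho> (cdt \<rho> M) = (\<integral>x. x \<partial>M)" "fstd \<rho> (cdt \<rho> M) = mstd M"
proof -
  interpret R: real_distribution \<rho> by fact
  have [measurable]: "cdt \<rho> M \<in> borel_measurable \<rho>"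
    using borel_measurable_cdt[OF assms(1)] by simp
  have "(\<integral>x. f x \<partial>M) = (\<integral>t. f (cdt \<rho> M t) \<partial>\<rho>)"
    if "f \<in> borel_measurable borel" for f :: "real \<Rightarrow> real"
    using integral_distr[of "cdt \<rho> M" \<rho> borel f] distr_cdt[OF assms] that by simp
  from this[of "\<lambda>x. x"] this[of "\<lambda>x. (x - (\<integral>y. y \<partial>M))\<^sup>2"]
  show "fmean \<rho> (cdt \<rho> M) = (\<integral>x. x \<partial>M)" "fstd \<rho> (cdt \<rho> M) = mstd M"
    by (simp_all add: fmean_def fstd_def mstd_def)
qed

lemma bounded_real_distribution_scale:
  assumes "s > 0"
  shows "bounded_real_distribution (distr M borel ((*) s)) (s * a) (s * b)"
proof -
  have "AE x in M. s * a \<le> s * x \<and> s * x \<le> s * b"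
    using AE_in_interval by eventually_elim (use assms in simp)
  then have "AE x in distr M borel ((*) s). s * a \<le> x \<and> x \<le> s * b"
    by (subst AE_distr_iff) auto
  then show ?thesis
    by (intro bounded_real_distribution.intro bounded_real_distribution_axioms.intro
        real_distribution_distr) auto
qed

lemma cdt_scale:
  assumes "s > 0" and "cdf \<rho> t < 1"
  shows "cdt \<rho> (distr M borel ((*) s)) t = s * cdt \<rho> M t"
proof -
  define S where "S = {w. cdf \<rho> t < cdf M w}"
  have "0 \<le> cdf \<rho> t"
    by (simp add: cdf_def)
  have "cdf (distr M borel ((*) s)) v = cdf M (v / s)" for v
  proof -
    have "(*) s -` {..v} = {..v / s}"
      using assms(1) by (auto simp: pos_le_divide_eq mult.commute)
    then show ?thesis
      by (simp add: cdf_def measure_distr)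
  qed
  then have "{v. cdf \<rho> t < cdf (distr M borel ((*) s)) v} = {v. v / s \<in> S}"
    by (simp add: S_def)
  also have "\<dots> = (*) s ` S"
  proof
    show "{v. v / s \<in> S} \<subseteq> (*) s ` S"
      using assms(1) by (auto intro!: image_eqI[where x="_ / s"])
    show "(*) s ` S \<subseteq> {v. v / s \<in> S}"
      using assms(1) by auto
  qed
  moreover have "Inf ((*) s ` S) = s * Inf S"
  proof -
    have "S \<noteq> {}" "bdd_below S"
      using cdf_superlevel_set[OF \<open>0 \<le> cdf \<rho> t\<close> assms(2)] by (auto simp: S_def bdd_below_def)
    then show ?thesis
      using assms(1)
      by (intro continuous_at_Inf_mono[symmetric]) (auto simp: mono_def intro: continuous_intros)
  qed
  ultimately show ?thesis
    by (simp add: cdt_def gen_inv_def S_def)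
qed

lemma normalized_cdt_bound:
  assumes "real_distribution \<rho>" "\<And>x. measure \<rho> {x} = 0" and "cdf \<rho> t < 1"
    and "0 < c" "c \<le> mstd M"
  shows "\<bar>normalized_cdt \<rho> M t\<bar> \<le> (b - a) / c"
proof -
  have "\<bar>cdt \<rho> M t - fmean \<rho> (cdt \<rho> M)\<bar> \<le> b - a"
    using cdt_in_interval[OF assms(3)] mean_in_interval cdt_moments(1)[OF assms(1,2)]
    by linarith
  moreover have "c \<le> fstd \<rho> (cdt \<rho> M)"
    using cdt_moments(2)[OF assms(1,2)] assms(5) by simp
  ultimately show ?thesis
    unfolding normalized_cdt_def abs_divide using assms(4)
    by (intro frac_le) auto
qed

lemma normalized_cdt_scale:
  assumes "real_distribution \<rho>" "\<And>x. measure \<rho> {x} = 0" and "cdf \<rho> t < 1" and "s > 0"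
  shows "normalized_cdt \<rho> (distr M borel ((*) s)) t = normalized_cdt \<rho> M t"
proof -
  interpret S: bounded_real_distribution "distr M borel ((*) s)" "s * a" "s * b"
    using assms(4) by (rule bounded_real_distribution_scale)
  have "fmean \<rho> (cdt \<rho> (distr M borel ((*) s))) = s * fmean \<rho> (cdt \<rho> M)"
    using S.cdt_moments(1)[OF assms(1,2)] cdt_moments(1)[OF assms(1,2)] by (simp add: mean_distr_scale)
  moreover have "fstd \<rho> (cdt \<rho> (distr M borel ((*) s))) = s * fstd \<rho> (cdt \<rho> M)"
    using S.cdt_moments(2)[OF assms(1,2)] cdt_moments(2)[OF assms(1,2)] assms(4)
    by (simp add: mstd_distr_scale)
  ultimately show ?thesis
    using cdt_scale[OF assms(4,3)] assms(4)
    by (simp add: normalized_cdt_def flip: right_diff_distrib)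
qed

end

section \<open>The circular Radon transform and similarities\<close>

lemma Nphi_eq_normalized_cdt: "Nphi \<rho> \<mu> t \<theta> = normalized_cdt \<rho> (circ_radon \<mu> \<theta>) t"
  by (simp add: Nphi_def normalized_cdt_def)

lemma AE_in_msupport:
  fixes \<mu> :: "'a::{metric_space, second_countable_topology} measure"
  assumes "sets \<mu> = sets borel"
  shows "AE x in \<mu>. x \<in> msupport \<mu>"
proof -
  define F where "F = {ball z e | z e. e > 0 \<and> emeasure \<mu> (ball z e) = 0}"
  obtain F' where F': "F' \<subseteq> F" "countable F'" "\<Union>F' = \<Union>F"
    using Lindelof[of F] by (auto simp: F_def)
  have null: "(\<Union>S\<in>F'. S) \<in> null_sets \<mu>"
    using F' assms by (intro null_sets_UN') (auto simp: F_def null_sets_def)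
  have cover: "x \<in> (\<Union>S\<in>F'. S)" if "x \<notin> msupport \<mu>" for x
    using that F'(3) by (force simp: msupport_def F_def)
  show ?thesis
    by (rule AE_I'[OF null]) (use cover in auto)
qed

lemma bounded_real_distribution_circ_radon:
  fixes \<mu> :: "'a::euclidean_space measure"
  assumes "prob_space \<mu>" "sets \<mu> = sets borel" "msupport \<mu> \<subseteq> cball 0 R"
  shows "bounded_real_distribution (circ_radon \<mu> \<theta>) (norm \<theta> - R) (norm \<theta> + R)"
proof -
  have m: "(\<lambda>x. norm (x - \<theta>)) \<in> borel_measurable \<mu>"
    by (subst measurable_cong_sets[OF assms(2) refl]) simp
  have "AE x in \<mu>. norm \<theta> - R \<le> norm (x - \<theta>) \<and> norm (x - \<theta>) \<le> norm \<theta> + R"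
    using AE_in_msupport[OF assms(2)]
  proof eventually_elim
    case (elim x)
    then have "norm x \<le> R"
      using assms(3) by auto
    then show ?case
      using norm_triangle_ineq2[of \<theta> x] norm_triangle_ineq4[of x \<theta>] by (auto simp: norm_minus_commute)
  qed
  then show ?thesis
    unfolding circ_radon_def using m assms(1)
    by (intro bounded_real_distribution.intro bounded_real_distribution_axioms.intro
        prob_space.real_distribution_distr) (auto simp: AE_distr_iff)
qed

lemma Pplus_circ_radon_bounds:
  fixes \<mu> :: "'a::euclidean_space measure"
  assumes "\<mu> \<in> Pplus_circ"
  obtains c R where "c > 0"
    "\<And>\<theta>. bounded_real_distribution (circ_radon \<mu> \<theta>) (norm \<theta> - R) (norm \<theta> + R)"
    "\<And>\<theta>. c \<le> mstd (circ_radon \<mu> \<theta>)"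
proof -
  obtain c where \<mu>: "prob_space \<mu>" "sets \<mu> = sets borel" "compact (msupport \<mu>)"
    and c: "c > 0" "\<And>\<theta>. c \<le> mstd (circ_radon \<mu> \<theta>)"
    using assms by (auto simp: Pplus_circ_def)
  obtain R where "\<forall>x\<in>msupport \<mu>. norm x \<le> R"
    using compact_imp_bounded[OF \<mu>(3)] by (auto simp: bounded_iff)
  then have "msupport \<mu> \<subseteq> cball 0 R"
    by auto
  with \<mu> c that bounded_real_distribution_circ_radon show ?thesis
    by blast
qed

lemma bounded_Nphi:
  assumes "real_distribution \<rho>" "\<And>x. measure \<rho> {x} = 0" and "\<mu> \<in> Pplus_circ" and "cdf \<rho> t < 1"
  shows "bounded (range (Nphi \<rho> \<mu> t))"
proof -
  obtain c R where "c > 0"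
    and N: "\<And>\<theta>. bounded_real_distribution (circ_radon \<mu> \<theta>) (norm \<theta> - R) (norm \<theta> + R)"
    and "\<And>\<theta>. c \<le> mstd (circ_radon \<mu> \<theta>)"
    using Pplus_circ_radon_bounds[OF assms(3)] by blast
  have "\<bar>Nphi \<rho> \<mu> t \<theta>\<bar> \<le> (norm \<theta> + R - (norm \<theta> - R)) / c" for \<theta>
    unfolding Nphi_eq_normalized_cdt
    by (rule bounded_real_distribution.normalized_cdt_bound[OF N assms(1,2,4)]) fact+
  then have "\<bar>Nphi \<rho> \<mu> t \<theta>\<bar> \<le> 2 * R / c" for \<theta>
    by simp
  then show ?thesis
    unfolding bounded_iff by (auto intro!: exI[of _ "2 * R / c"])
qed

locale similarity =
  fixes s :: real and Q :: "'a::euclidean_space \<Rightarrow> 'a" and y :: 'a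
  assumes pos: "s > 0" and orthogonal: "orthogonal_transformation Q"
begin

definition T :: "'a \<Rightarrow> 'a" where
  "T x = s *\<^sub>R Q x + y"

definition T_inv :: "'a \<Rightarrow> 'a" where
  "T_inv z = inv Q ((z - y) /\<^sub>R s)"

lemma Q_inv_right: "Q (inv Q v) = v"
  using orthogonal_transformation_surj[OF orthogonal] by (simp add: surj_f_inv_f)

lemma T_T_inv: "T (T_inv z) = z"
  using pos by (simp add: T_def T_inv_def Q_inv_right)

lemma T_inv_T: "T_inv (T x) = x"
  using pos orthogonal_transformation_inj[OF orthogonal] by (simp add: T_def T_inv_def)

lemma bij_T_inv: "bij T_inv"
  by (rule o_bij[where g = T]) (simp_all add: fun_eq_iff T_T_inv T_inv_T)

lemma norm_T_diff: "norm (T x - z) = s * norm (x - T_inv z)"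
proof -
  have "T x - z = s *\<^sub>R (Q x - Q (T_inv z))"
    using pos by (simp add: T_def T_inv_def Q_inv_right algebra_simps)
  also have "\<dots> = s *\<^sub>R Q (x - T_inv z)"
    using orthogonal_transformation_linear[OF orthogonal] by (simp add: linear_diff)
  finally show ?thesis
    using pos orthogonal_transformation_norm[OF orthogonal] by simp
qed

lemma continuous_on_T: "continuous_on A T"
  using orthogonal_transformation_linear[OF orthogonal]
  unfolding T_def by (intro continuous_intros linear_continuous_on linear_conv_bounded_linear[THEN iffD1])

lemma measurable_T: "sets \<mu> = sets borel \<Longrightarrow> T \<in> measurable \<mu> borel"
  using continuous_on_T
  by (subst measurable_cong_sets[of \<mu> borel borel borel]) (auto intro: borel_measurable_continuous_onI)

lemma circ_radon_distr_T:
  assumes "sets \<mu> = sets borel"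
  shows "circ_radon (distr \<mu> borel T) \<theta> = distr (circ_radon \<mu> (T_inv \<theta>)) borel ((*) s)"
proof -
  have m: "(\<lambda>x. norm (x - T_inv \<theta>)) \<in> borel_measurable \<mu>"
    by (subst measurable_cong_sets[OF assms refl]) simp
  have "circ_radon (distr \<mu> borel T) \<theta> = distr \<mu> borel (\<lambda>x. norm (T x - \<theta>))"
    unfolding circ_radon_def using measurable_T[OF assms] by (simp add: distr_distr comp_def)
  also have "\<dots> = distr (circ_radon \<mu> (T_inv \<theta>)) borel ((*) s)"
    unfolding circ_radon_def using m by (simp add: distr_distr comp_def norm_T_diff)
  finally show ?thesis .
qed

lemma msupport_distr_T:
  assumes "sets \<mu> = sets borel"
  shows "msupport (distr \<mu> borel T) = T ` msupport \<mu>"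
proof -
  have ball: "emeasure (distr \<mu> borel T) (ball z e) = emeasure \<mu> (ball (T_inv z) (e / s))" for z e
  proof -
    have "T -` ball z e \<inter> space \<mu> = ball (T_inv z) (e / s)"
      using sets_eq_imp_space_eq[OF assms] pos
      by (auto simp: dist_norm norm_T_diff[symmetric] norm_minus_commute field_simps)
    then show ?thesis
      by (simp add: emeasure_distr[OF measurable_T[OF assms]])
  qed
  have iff: "z \<in> msupport (distr \<mu> borel T) \<longleftrightarrow> T_inv z \<in> msupport \<mu>" for z
  proof -
    let ?P = "\<lambda>r. 0 < emeasure \<mu> (ball (T_inv z) r)"
    have "(\<forall>e>0. ?P (e / s)) \<longleftrightarrow> (\<forall>e>0. ?P e)"
    proof safe
      fix e :: real
      assume "\<forall>e>0. ?P (e / s)" "e > 0"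
      then show "?P e"
        using pos by (auto dest: spec[of _ "e * s"])
    qed (use pos in simp)
    then show ?thesis
      by (simp add: msupport_def ball)
  qed
  show ?thesis
  proof (intro set_eqI iffI)
    fix z
    assume "z \<in> msupport (distr \<mu> borel T)"
    then show "z \<in> T ` msupport \<mu>"
      using iff by (intro image_eqI[where x = "T_inv z"]) (simp_all add: T_T_inv)
  next
    fix z
    assume "z \<in> T ` msupport \<mu>"
    then show "z \<in> msupport (distr \<mu> borel T)"
      using iff T_inv_T by auto
  qed
qed

lemma Pplus_circ_distr_T:
  assumes "\<mu> \<in> Pplus_circ"
  shows "distr \<mu> borel T \<in> Pplus_circ"
proof -
  obtain c where \<mu>: "prob_space \<mu>" "sets \<mu> = sets borel" "compact (msupport \<mu>)"
    and c: "c > 0" "\<And>\<theta>. c \<le> mstd (circ_radon \<mu> \<theta>)"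
    using assms by (auto simp: Pplus_circ_def)
  have "prob_space (distr \<mu> borel T)"
    using \<mu>(1) measurable_T[OF \<mu>(2)] by (rule prob_space.prob_space_distr)
  moreover have "compact (msupport (distr \<mu> borel T))"
    unfolding msupport_distr_T[OF \<mu>(2)] using continuous_on_T \<mu>(3) by (rule compact_continuous_image)
  moreover have "s * c \<le> mstd (circ_radon (distr \<mu> borel T) \<theta>)" for \<theta>
  proof -
    have "sets (circ_radon \<mu> (T_inv \<theta>)) = sets borel"
      by (simp add: circ_radon_def)
    then have "mstd (circ_radon (distr \<mu> borel T) \<theta>) = s * mstd (circ_radon \<mu> (T_inv \<theta>))"
      using pos by (simp add: circ_radon_distr_T[OF \<mu>(2)] mstd_distr_scale)
    then show ?thesis
      using c(2)[of "T_inv \<theta>"] pos by simp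
  qed
  ultimately show ?thesis
    using c(1) pos by (auto simp: Pplus_circ_def intro!: exI[of _ "s * c"])
qed

lemma Nphi_distr_T:
  assumes "real_distribution \<rho>" "\<And>x. measure \<rho> {x} = 0" and "\<mu> \<in> Pplus_circ" and "cdf \<rho> t < 1"
  shows "Nphi \<rho> (distr \<mu> borel T) t \<theta> = Nphi \<rho> \<mu> t (T_inv \<theta>)"
proof -
  obtain c R
    where "\<And>\<theta>. bounded_real_distribution (circ_radon \<mu> \<theta>) (norm \<theta> - R) (norm \<theta> + R)"
    using Pplus_circ_radon_bounds[OF assms(3)] by blast
  then interpret N: bounded_real_distribution "circ_radon \<mu> (T_inv \<theta>)"
    "norm (T_inv \<theta>) - R" "norm (T_inv \<theta>) + R" .
  have "sets \<mu> = sets borel"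
    using assms(3) by (simp add: Pplus_circ_def)
  then show ?thesis
    using N.normalized_cdt_scale[OF assms(1,2,4) pos]
    by (simp add: Nphi_eq_normalized_cdt circ_radon_distr_T)
qed

lemma Nh_distr_T:
  assumes rho: "real_distribution \<rho>" and atomless: "\<And>x. measure \<rho> {x} = 0"
    and \<mu>: "\<mu> \<in> Pplus_circ" and \<mu>_Linf: "Nh \<rho> h \<mu> \<in> Linf \<rho>"
    and h_invariant: "\<And>g \<psi>. bounded (range g) \<Longrightarrow> bij \<psi> \<Longrightarrow> h (g \<circ> \<psi>) = h g"
  shows "Nh \<rho> h (distr \<mu> borel T) \<in> Linf \<rho>"
    and "AE t in \<rho>. Nh \<rho> h (distr \<mu> borel T) t = Nh \<rho> h \<mu> t"
proof -
  interpret R: real_distribution \<rho> by fact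
  define \<nu> where "\<nu> = distr \<mu> borel T"
  have eq: "Nh \<rho> h \<nu> t = Nh \<rho> h \<mu> t" if "cdf \<rho> t < 1" for t
  proof -
    have "Nh \<rho> h \<nu> t = h (Nphi \<rho> \<mu> t \<circ> T_inv)"
      using Nphi_distr_T[OF rho atomless \<mu> that] by (simp add: Nh_def \<nu>_def comp_def)
    also have "\<dots> = Nh \<rho> h \<mu> t"
      unfolding Nh_def by (rule h_invariant[OF bounded_Nphi[OF rho atomless \<mu> that] bij_T_inv])
    finally show ?thesis .
  qed
  show AE_eq: "AE t in \<rho>. Nh \<rho> h (distr \<mu> borel T) t = Nh \<rho> h \<mu> t"
    using R.AE_cdf_less_1[OF atomless] by eventually_elim (simp add: eq[unfolded \<nu>_def])
  \<comment> \<open>Where \<open>cdf \<rho> t = 1\<close>, \<open>Nh \<rho> h \<nu> t\<close> does not depend on \<open>t\<close>; this gives measurability.\<close>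
  define \<kappa> where "\<kappa> = h (\<lambda>\<theta>. (gen_inv (cdf (circ_radon \<nu> \<theta>)) 1
    - fmean \<rho> (cdt \<rho> (circ_radon \<nu> \<theta>))) / fstd \<rho> (cdt \<rho> (circ_radon \<nu> \<theta>)))"
  have "Nh \<rho> h \<nu> = (\<lambda>t. if cdf \<rho> t < 1 then Nh \<rho> h \<mu> t else \<kappa>)"
  proof
    fix t
    show "Nh \<rho> h \<nu> t = (if cdf \<rho> t < 1 then Nh \<rho> h \<mu> t else \<kappa>)"
      using eq R.cdf_bounded_prob[of t]
      by (cases "cdf \<rho> t < 1") (simp_all add: Nh_def Nphi_def cdt_def \<kappa>_def)
  qed
  moreover have "Nh \<rho> h \<mu> \<in> borel_measurable \<rho>"
    using \<mu>_Linf by (simp add: Linf_def)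
  ultimately have "Nh \<rho> h \<nu> \<in> borel_measurable \<rho>"
    by simp
  moreover obtain B where "AE t in \<rho>. \<bar>Nh \<rho> h \<mu> t\<bar> \<le> B"
    using \<mu>_Linf by (auto simp: Linf_def)
  with AE_eq have "AE t in \<rho>. \<bar>Nh \<rho> h \<nu> t\<bar> \<le> B"
    unfolding \<nu>_def by eventually_elim simp
  ultimately show "Nh \<rho> h (distr \<mu> borel T) \<in> Linf \<rho>"
    by (auto simp: Linf_def \<nu>_def)
qed

end

lemma sim_orbitE:
  assumes "\<nu> \<in> sim_orbit \<mu>"
  obtains s Q y where "similarity s Q" "\<nu> = distr \<mu> borel (similarity.T s Q y)"
proof -
  obtain s Q y where "\<nu> = distr \<mu> borel (\<lambda>x. s *\<^sub>R Q x + y)" "s > 0" "orthogonal_transformation Q"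
    using assms by (auto simp: sim_orbit_def)
  moreover from this have "similarity s Q"
    by (intro similarity.intro)
  moreover from this have "similarity.T s Q y = (\<lambda>x. s *\<^sub>R Q x + y)"
    by (simp add: fun_eq_iff similarity.T_def)
  ultimately show ?thesis
    using that[of s Q y] by simp
qed

theorem theorem18:
  fixes \<rho> :: "real measure"
    and h :: "('a::euclidean_space \<Rightarrow> real) \<Rightarrow> real"
    and \<mu>0 \<nu>0 :: "'a measure"
  assumes rho_prob: "prob_space \<rho>"
    and rho_sets: "sets \<rho> = sets borel"
    and rho_no_atoms: "\<And>x. emeasure \<rho> {x} = 0"
    and h_bounded: "\<And>B. \<exists>M. \<forall>g. (\<forall>\<theta>. \<bar>g \<theta>\<bar> \<le> B) \<longrightarrow> \<bar>h g\<bar> \<le> M"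
    and h_invariant: "\<And>g \<psi>. bounded (range g) \<Longrightarrow> bij \<psi> \<Longrightarrow> h (g \<circ> \<psi>) = h g"
    and mu0: "\<mu>0 \<in> Pplus_circ"
    and nu0: "\<nu>0 \<in> Pplus_circ"
    and mu0_Linf: "Nh \<rho> h \<mu>0 \<in> Linf \<rho>"
    and nu0_Linf: "Nh \<rho> h \<nu>0 \<in> Linf \<rho>"
    and distinct: "\<not> (AE t in \<rho>. Nh \<rho> h \<mu>0 t = Nh \<rho> h \<nu>0 t)"
  shows "sim_orbit \<mu>0 \<subseteq> Pplus_circ \<and> sim_orbit \<nu>0 \<subseteq> Pplus_circ \<and>
         lin_separable_Linf \<rho> (Nh \<rho> h ` sim_orbit \<mu>0) (Nh \<rho> h ` sim_orbit \<nu>0)"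
proof -
  have rho: "real_distribution \<rho>"
    using rho_prob rho_sets by (simp add: real_distribution_def real_distribution_axioms_def)
  have atomless: "\<And>x. measure \<rho> {x} = 0"
    using rho_no_atoms by (simp add: measure_def)
  have orbit_Pplus: "sim_orbit \<mu> \<subseteq> Pplus_circ" if "\<mu> \<in> Pplus_circ" for \<mu> :: "'a measure"
    using that by (auto elim!: sim_orbitE intro: similarity.Pplus_circ_distr_T)
  have orbit_Nh: "Nh \<rho> h \<nu> \<in> Linf \<rho>" "AE t in \<rho>. Nh \<rho> h \<nu> t = Nh \<rho> h \<mu> t"
    if "\<mu> \<in> Pplus_circ" "Nh \<rho> h \<mu> \<in> Linf \<rho>" "\<nu> \<in> sim_orbit \<mu>" for \<mu> \<nu> :: "'a measure"
    using that(3) by (auto elim!: sim_orbitE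
        dest: similarity.Nh_distr_T[OF _ rho atomless that(1,2) h_invariant])
  show ?thesis
    using orbit_Pplus[OF mu0] orbit_Pplus[OF nu0] orbit_Nh[OF mu0 mu0_Linf] orbit_Nh[OF nu0 nu0_Linf]
    by (auto intro!: lin_separable_Linf_AE_classes[OF rho_prob mu0_Linf nu0_Linf distinct])
qed

end
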